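(* Let $(X_1,Y_1,Y'_1),\ldots,(X_n,Y_n,Y'_n)$ be a sequence of independent triples of Bernoulli random variables (triples mutually independent; variables within a triple may be dependent) such that $\mathbb{E}[X_i]=p_i$, $\mathbb{E}[Y_i]=q_i$, $\mathbb{E}[Y'_i]=q'_i$ and $\mathbb{E}[X_iY_i]=0$ (i.e., $X_i$ and $Y_i$ are never both $1$). Suppose further that for each $i$ either (a) $q'_i=0$, or (b) $q_i=1-p_i$, and $X_i=\mathbf{1}(\theta_i<p_i)$ and $Y'_i=\mathbf{1}(\theta_i<q'_i)$ for a threshold $\theta_i$ chosen uniformly in $[0,1]$. Let $X=\sum_i X_i$, $Y=\sum_i(Y_i+Y'_i)$, $\mu_x=\mathbb{E}[X]$, $\mu_y=\mathbb{E}[Y]$. If $\mu_x+\mu_y>1$, then $$\frac{\mu_x-1}{\mu_x+\mu_y-1}\le\mathbb{E}\Big[\frac{X}{X+Y}\Big]\le\frac{\mu_x}{\mu_x+\mu_y-1}.$$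
   Context: Convention: in the expression $\frac{X}{X+Y}$, the value $0/0$ is interpreted as $1$ for the left inequality and as $0$ for the right inequality. $\mathbf{1}(\cdot)$ denotes the indicator of an event. *)

theory Defs
  imports "HOL-Probability.Probability"
begin

end

theory Submission
  imports Defs
begin

(*
  Fix i and let R be the sum of the totals V_j = X_j + Y_j + Y'_j of the other triples, which is
  independent of the i-th triple. As X_i Y_i = 0, the share X_i / (X + Y) equals
  X_i / (1 + Y'_i + R), so its expectation is E[X_i Y'_i] b + E[X_i (1 - Y'_i)] a with
  a = E[1 / (1 + R)] and b = E[1 / (2 + R)]; the share of Y_i + Y'_i is treated alike.

  The key estimate is (sum_{j ~= i} E V_j + s) (s b + (1 - s) a) <= 1 for s = E Y'_i, where
  s b + (1 - s) a = E h_s(R) and h_s(r) = E[1 / (1 + xi + r)] for xi ~ Bernoulli(s). Each V_j is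
  integer valued and lies a.s. in an interval [c_j, c_j + 1], so independence and monotonicity
  of h_s give E V_j * E h_s(R) <= E[V_j h_s(R - 1)]; summing over j, the estimate follows from
  the pointwise inequality R h_s(R - 1) + s h_s(R) <= 1.

  In case (a) the estimate bounds a by 1 / (mu_x + mu_y - 1). In case (b) the common threshold
  makes X_i and Y'_i comonotone, so E[X_i Y'_i] = min(p_i, q'_i), and both shares are bounded by
  interpolating linearly in p_i. Summing over i bounds E[X / (X + Y)] by
  mu_x / (mu_x + mu_y - 1) and E[Y / (X + Y)] by mu_y / (mu_x + mu_y - 1); the lower bound is
  one minus the latter.
*)

section \<open>Expected reciprocals\<close>

text \<open>\<open>recip_mean s r\<close> is the expectation of \<open>1 / (1 + \<xi> + r)\<close> for \<open>\<xi>\<close> Bernoulli with parameter \<open>s\<close>.\<close>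

definition recip_mean :: "real \<Rightarrow> real \<Rightarrow> real" where
  "recip_mean s r = s / (2 + r) + (1 - s) / (1 + r)"

lemma recip_mean_antimono:
  "0 \<le> x \<Longrightarrow> x \<le> y \<Longrightarrow> 0 \<le> s \<Longrightarrow> s \<le> 1 \<Longrightarrow> recip_mean s y \<le> recip_mean s x"
  unfolding recip_mean_def by (intro add_mono divide_left_mono mult_pos_pos) auto

lemma recip_mean_nonneg: "0 \<le> r \<Longrightarrow> 0 \<le> s \<Longrightarrow> s \<le> 1 \<Longrightarrow> 0 \<le> recip_mean s r"
  unfolding recip_mean_def by auto

lemma recip_mean_le_1: "0 \<le> r \<Longrightarrow> 0 \<le> s \<Longrightarrow> s \<le> 1 \<Longrightarrow> recip_mean s r \<le> 1"
  using recip_mean_antimono[of 0 r s] by (simp add: recip_mean_def)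

lemma recip_mean_measurable [measurable]: "recip_mean s \<in> borel_measurable borel"
  unfolding recip_mean_def by measurable

lemma Nats_eq_0_or_ge_1: "(r :: real) \<in> \<nat> \<Longrightarrow> r = 0 \<or> 1 \<le> r"
  by (induction rule: Nats_induct) auto

lemma sum_in_Nats: "(\<And>j. j \<in> J \<Longrightarrow> f j \<in> \<nat>) \<Longrightarrow> sum f J \<in> \<nat>"
  by (induction J rule: infinite_finite_induct) auto

lemma recip_mean_shift_le:
  fixes v c r s :: real
  assumes v: "v \<in> \<nat>" and c: "0 \<le> c" "c \<le> v" "v \<le> c + 1" and r: "0 \<le> r"
    and s: "0 \<le> s" "s \<le> 1"
  shows "recip_mean s (v + r) \<le> recip_mean s (c + r)"
    and "v * recip_mean s (c + r) \<le> v * recip_mean s (v + r - 1)"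
proof -
  show "recip_mean s (v + r) \<le> recip_mean s (c + r)"
    using c r s by (intro recip_mean_antimono) auto
  show "v * recip_mean s (c + r) \<le> v * recip_mean s (v + r - 1)"
    using Nats_eq_0_or_ge_1[OF v]
  proof
    assume "1 \<le> v"
    with c r s show ?thesis
      by (intro mult_left_mono recip_mean_antimono) auto
  qed simp
qed

lemma mult_recip_mean_shift_bounds:
  fixes v r s :: real
  assumes v: "v \<in> \<nat>" and r: "0 \<le> r" and s: "0 \<le> s" "s \<le> 1"
  shows "0 \<le> v * recip_mean s (v + r - 1) \<and> v * recip_mean s (v + r - 1) \<le> v"
  using Nats_eq_0_or_ge_1[OF v]
proof
  assume "1 \<le> v"
  with r have "0 \<le> v + r - 1"
    by simp
  with \<open>1 \<le> v\<close> recip_mean_nonneg[OF _ s] recip_mean_le_1[OF _ s] show ?thesis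
    by (simp add: mult_left_le)
qed simp

lemma recip_mean_balance:
  assumes r: "r \<in> \<nat>" and s: "0 \<le> s" "s \<le> 1"
  shows "r * recip_mean s (r - 1) + s * recip_mean s r \<le> 1"
  using Nats_eq_0_or_ge_1[OF r]
proof
  assume "r = 0"
  moreover have "s * (1 - s / 2) \<le> 1 * 1" using s by (intro mult_mono) auto
  ultimately show ?thesis by (simp add: recip_mean_def)
next
  assume r1: "1 \<le> r"
  have "r * recip_mean s (r - 1) = r * s / (1 + r) + (1 - s)"
    using r1 unfolding recip_mean_def by (simp add: distrib_left add.commute)
  moreover have "s * recip_mean s r = s\<^sup>2 / (2 + r) + (s - s\<^sup>2) / (1 + r)"
    unfolding recip_mean_def
    by (simp add: power2_eq_square algebra_simps add_divide_distrib diff_divide_distrib)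
  moreover have "r * s / (1 + r) + (s - s\<^sup>2) / (1 + r) = s - s\<^sup>2 / (1 + r)"
  proof -
    have "r * s / (1 + r) + (s - s\<^sup>2) / (1 + r) = (s * (1 + r) - s\<^sup>2) / (1 + r)"
      by (simp add: add_divide_distrib[symmetric] algebra_simps)
    also have "\<dots> = s - s\<^sup>2 / (1 + r)"
      using r1 by (simp add: diff_divide_distrib)
    finally show ?thesis .
  qed
  ultimately have "r * recip_mean s (r - 1) + s * recip_mean s r
      = 1 - s\<^sup>2 * (1 / (1 + r) - 1 / (2 + r))"
    by (simp add: algebra_simps)
  also have "\<dots> \<le> 1"
    using r1 by (simp add: frac_le)
  finally show ?thesis .
qed

section \<open>Elementary bounds on the shares\<close>

text \<open>In the application \<open>a\<close> and \<open>b\<close> are the means of \<open>1 / (1 + R)\<close> and \<open>1 / (2 + R)\<close>,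
  \<open>s = E Y'\<^sub>i\<close>, \<open>p = E X\<^sub>i\<close> and \<open>L = \<mu>\<^sub>x + \<mu>\<^sub>y - 1\<close>. Both sides are affine in \<open>p\<close> on \<open>[0, s]\<close>
  and on \<open>[s, 1]\<close>, and at the end points the claims reduce to \<open>L b \<le> 1\<close> and to \<open>K\<close>.\<close>

lemma coupled_shares_le_of_le:
  fixes L a b s p :: real
  assumes L: "0 < L" and K: "L * (s * b + (1 - s) * a) \<le> 1" and Lb: "L * b \<le> 1"
    and p: "0 \<le> p" "p \<le> s"
  shows "p * b \<le> p / L" and "(2 * s - p) * b + (1 - s) * a \<le> (1 - p + s) / L"
proof -
  have "L * (p * b) \<le> p * 1"
    using mult_left_mono[OF Lb p(1)] by (simp add: mult.left_commute)
  then show "p * b \<le> p / L"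
    using L by (simp add: field_simps)
  have "L * ((2 * s - p) * b + (1 - s) * a) = L * (s * b + (1 - s) * a) + (s - p) * (L * b)"
    by (simp add: algebra_simps)
  also have "\<dots> \<le> 1 + (s - p) * 1"
    using K Lb p by (intro add_mono mult_left_mono) auto
  finally show "(2 * s - p) * b + (1 - s) * a \<le> (1 - p + s) / L"
    using L by (simp add: field_simps)
qed

lemma coupled_shares_le_of_ge:
  fixes L a b s p :: real
  assumes L: "0 < L" and K: "L * (s * b + (1 - s) * a) \<le> 1" and Lb: "L * b \<le> 1"
    and s: "0 \<le> s" "s \<le> p" and p: "p \<le> 1"
  shows "s * b + (p - s) * a \<le> p / L" and "s * b + (1 - p) * a \<le> (1 - p + s) / L"
proof -
  consider "s = 1" "p = 1" | "0 < 1 - s"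
    using s p by linarith
  then have "L * (s * b + (p - s) * a) \<le> p \<and> L * (s * b + (1 - p) * a) \<le> 1 - p + s"
  proof cases
    case 1
    then show ?thesis using Lb by simp
  next
    case 2
    have "(1 - s) * (L * (s * b + (p - s) * a))
        = (p - s) * (L * (s * b + (1 - s) * a)) + s * (1 - p) * (L * b)"
      by (simp add: algebra_simps)
    also have "\<dots> \<le> (p - s) * 1 + s * (1 - p) * 1"
      using K Lb s p by (intro add_mono mult_left_mono) auto
    also have "\<dots> = (1 - s) * p"
      by (simp add: algebra_simps)
    finally have first: "L * (s * b + (p - s) * a) \<le> p"
      using 2 by simp
    have "(1 - s) * (L * (s * b + (1 - p) * a))
        = (1 - p) * (L * (s * b + (1 - s) * a)) + s * (p - s) * (L * b)"
      by (simp add: algebra_simps)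
    also have "\<dots> \<le> (1 - p) * 1 + s * (p - s) * 1"
      using K Lb s p by (intro add_mono mult_left_mono) auto
    also have "\<dots> = (1 - s) * (1 - p + s)"
      by (simp add: algebra_simps)
    finally show ?thesis
      using first 2 by simp
  qed
  with L show "s * b + (p - s) * a \<le> p / L" and "s * b + (1 - p) * a \<le> (1 - p + s) / L"
    by (simp_all add: field_simps)
qed

lemma coupled_shares_le:
  fixes L a b s p :: real
  assumes L: "0 < L" and K: "L * (s * b + (1 - s) * a) \<le> 1" and b: "0 \<le> b" "b \<le> a"
    and s: "0 \<le> s" "s \<le> 1" and p: "0 \<le> p" "p \<le> 1"
  shows "min p s * b + (p - min p s) * a \<le> p / L"
    and "(2 * s - min p s) * b + (1 - s - p + min p s) * a \<le> (1 - p + s) / L"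
proof -
  have "L * b = L * (s * b + (1 - s) * b)"
    by (simp add: algebra_simps)
  also have "\<dots> \<le> L * (s * b + (1 - s) * a)"
    using L b s by (intro mult_left_mono add_left_mono) auto
  finally have Lb: "L * b \<le> 1"
    using K by linarith
  have "min p s * b + (p - min p s) * a \<le> p / L \<and>
      (2 * s - min p s) * b + (1 - s - p + min p s) * a \<le> (1 - p + s) / L"
  proof (cases "p \<le> s")
    case True
    then show ?thesis using coupled_shares_le_of_le[OF L K Lb p(1) True] by simp
  next
    case False
    then show ?thesis using coupled_shares_le_of_ge[OF L K Lb s(1) _ p(2)] by simp
  qed
  then show "min p s * b + (p - min p s) * a \<le> p / L"
    and "(2 * s - min p s) * b + (1 - s - p + min p s) * a \<le> (1 - p + s) / L"
    by auto
qed

lemma null_share_le: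
  fixes L a m x :: real
  assumes L: "0 < L" "L \<le> m" and K: "m * a \<le> 1" and a: "0 \<le> a" and x: "0 \<le> x"
  shows "x * a \<le> x / L"
proof -
  have "L * a \<le> 1"
    using K mult_right_mono[OF L(2) a] by linarith
  then have "a \<le> 1 / L"
    using L by (simp add: field_simps)
  then show ?thesis
    using mult_left_mono[OF _ x] by fastforce
qed

section \<open>Independence and the key estimate\<close>

context prob_space
begin

lemma indep_var_component_sum:
  fixes Z :: "'i \<Rightarrow> 'a \<Rightarrow> 'b::topological_space" and f u :: "'b \<Rightarrow> real"
  assumes indep: "indep_vars (\<lambda>_. borel) Z I" and J: "finite J" "J \<subseteq> I" "i \<in> I" "i \<notin> J"
    and f: "f \<in> borel_measurable borel" and u: "u \<in> borel_measurable borel"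
  shows "indep_var borel (\<lambda>\<omega>. f (Z i \<omega>)) borel (\<lambda>\<omega>. \<Sum>j\<in>J. u (Z j \<omega>))"
proof -
  let ?W = "\<lambda>k \<omega>. (if k = i then f else u) (Z k \<omega>)"
  have "indep_vars (\<lambda>_. borel) Z (insert i J)"
    using indep_vars_subset[OF indep] J by simp
  then have "indep_vars (\<lambda>_. borel) ?W (insert i J)"
    by (rule indep_vars_compose2) (simp add: f u)
  from indep_vars_sum[OF J(1,4) this]
  have "indep_var borel (?W i) borel (\<lambda>\<omega>. \<Sum>j\<in>J. ?W j \<omega>)" .
  also have "?W i = (\<lambda>\<omega>. f (Z i \<omega>))"
    by simp
  also have "(\<lambda>\<omega>. \<Sum>j\<in>J. ?W j \<omega>) = (\<lambda>\<omega>. \<Sum>j\<in>J. u (Z j \<omega>))"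
    using J(4) by (intro ext sum.cong) auto
  finally show ?thesis .
qed

lemma indep_var_integral_mult_compose:
  fixes X1 X2 :: "'a \<Rightarrow> real"
  assumes indep: "indep_var borel X1 borel X2" and g: "g \<in> borel_measurable borel"
    and int: "integrable M X1" "integrable M (\<lambda>\<omega>. g (X2 \<omega>))"
  shows "(\<integral>\<omega>. X1 \<omega> * g (X2 \<omega>) \<partial>M) = (\<integral>\<omega>. X1 \<omega> \<partial>M) * (\<integral>\<omega>. g (X2 \<omega>) \<partial>M)"
proof -
  have "indep_var borel (id \<circ> X1) borel (g \<circ> X2)"
    using indep g by (intro indep_var_compose) auto
  from indep_var_lebesgue_integral[OF this] int show ?thesis
    by (simp add: comp_def)
qed

lemma integrable_bounded_on_space:
  fixes f :: "'a \<Rightarrow> real"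
  assumes "f \<in> borel_measurable M" "\<And>\<omega>. \<omega> \<in> space M \<Longrightarrow> \<bar>f \<omega>\<bar> \<le> B"
  shows "integrable M f"
  using assms by (intro integrable_const_bound[where B=B] AE_I2) auto

lemma integrable_mult_recip_mean_shift:
  fixes V R :: "'a \<Rightarrow> real"
  assumes meas: "V \<in> borel_measurable M" "R \<in> borel_measurable M"
    and V: "\<And>\<omega>. \<omega> \<in> space M \<Longrightarrow> V \<omega> \<in> \<nat>" and R: "\<And>\<omega>. \<omega> \<in> space M \<Longrightarrow> 0 \<le> R \<omega>"
    and bound: "AE \<omega> in M. V \<omega> \<le> B" and s: "0 \<le> s" "s \<le> 1"
  shows "integrable M (\<lambda>\<omega>. V \<omega> * recip_mean s (V \<omega> + R \<omega> - 1))"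
proof (rule integrable_const_bound[where B=B])
  show "AE \<omega> in M. norm (V \<omega> * recip_mean s (V \<omega> + R \<omega> - 1)) \<le> B"
    using bound AE_space by eventually_elim (use mult_recip_mean_shift_bounds[OF V R s] in force)
  note [measurable] = meas
  show "(\<lambda>\<omega>. V \<omega> * recip_mean s (V \<omega> + R \<omega> - 1)) \<in> borel_measurable M"
    by measurable
qed

lemma expectation_mult_recip_mean_shift_le:
  fixes V R :: "'a \<Rightarrow> real"
  assumes indep: "indep_var borel V borel R"
    and V: "\<And>\<omega>. \<omega> \<in> space M \<Longrightarrow> V \<omega> \<in> \<nat>" and R: "\<And>\<omega>. \<omega> \<in> space M \<Longrightarrow> 0 \<le> R \<omega>"
    and sandwich: "AE \<omega> in M. c \<le> V \<omega> \<and> V \<omega> \<le> c + 1" and c: "0 \<le> c"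
    and s: "0 \<le> s" "s \<le> 1"
  shows "(\<integral>\<omega>. V \<omega> \<partial>M) * (\<integral>\<omega>. recip_mean s (V \<omega> + R \<omega>) \<partial>M)
    \<le> (\<integral>\<omega>. V \<omega> * recip_mean s (V \<omega> + R \<omega> - 1) \<partial>M)"
proof -
  have [measurable]: "V \<in> borel_measurable M" "R \<in> borel_measurable M"
    using indep_var_rv1[OF indep] indep_var_rv2[OF indep] by simp_all
  note shift = recip_mean_shift_le[OF V _ _ _ R s] c
  have int_V: "integrable M V"
  proof (rule integrable_const_bound[where B="c + 1"])
    show "AE \<omega> in M. norm (V \<omega>) \<le> c + 1"
      using sandwich AE_space by eventually_elim (use V Nats_eq_0_or_ge_1 in force)
  qed measurable
  have int_h: "integrable M (\<lambda>\<omega>. recip_mean s (f \<omega> + R \<omega>))"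
    if [measurable]: "f \<in> borel_measurable M" and "\<And>\<omega>. \<omega> \<in> space M \<Longrightarrow> 0 \<le> f \<omega>" for f
    by (rule integrable_bounded_on_space[where B=1], measurable)
       (use that(2) R recip_mean_nonneg[OF _ s] recip_mean_le_1[OF _ s] in force)
  have int_hV: "integrable M (\<lambda>\<omega>. recip_mean s (V \<omega> + R \<omega>))"
    using V Nats_eq_0_or_ge_1 by (intro int_h) force+
  have int_hc: "integrable M (\<lambda>\<omega>. recip_mean s (c + R \<omega>))"
    using int_h[of "\<lambda>_. c"] c by simp
  have "(\<integral>\<omega>. V \<omega> \<partial>M) * (\<integral>\<omega>. recip_mean s (V \<omega> + R \<omega>) \<partial>M)
      \<le> (\<integral>\<omega>. V \<omega> \<partial>M) * (\<integral>\<omega>. recip_mean s (c + R \<omega>) \<partial>M)"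
  proof (intro mult_left_mono integral_mono_AE int_hV int_hc)
    show "AE \<omega> in M. recip_mean s (V \<omega> + R \<omega>) \<le> recip_mean s (c + R \<omega>)"
      using sandwich AE_space by eventually_elim (use shift in auto)
    show "0 \<le> (\<integral>\<omega>. V \<omega> \<partial>M)"
      using V Nats_eq_0_or_ge_1 by (intro integral_nonneg_AE AE_I2) force
  qed
  also have "\<dots> = (\<integral>\<omega>. V \<omega> * recip_mean s (c + R \<omega>) \<partial>M)"
    by (rule indep_var_integral_mult_compose[OF indep _ int_V int_hc, symmetric]) simp
  also have "\<dots> \<le> (\<integral>\<omega>. V \<omega> * recip_mean s (V \<omega> + R \<omega> - 1) \<partial>M)"
  proof (rule integral_mono_AE)
    show "integrable M (\<lambda>\<omega>. V \<omega> * recip_mean s (c + R \<omega>))"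
      using indep_var_integrable[OF indep_var_compose[OF indep, of id borel "\<lambda>r. recip_mean s (c + r)"]]
        int_V int_hc by (simp add: comp_def)
    show "integrable M (\<lambda>\<omega>. V \<omega> * recip_mean s (V \<omega> + R \<omega> - 1))"
      using sandwich by (intro integrable_mult_recip_mean_shift[OF _ _ V R _ s]) (auto elim: AE_mp)
    show "AE \<omega> in M. V \<omega> * recip_mean s (c + R \<omega>) \<le> V \<omega> * recip_mean s (V \<omega> + R \<omega> - 1)"
      using sandwich AE_space by eventually_elim (use shift in auto)
  qed
  finally show ?thesis .
qed

lemma summand_mult_recip_mean_le:
  fixes V :: "'i \<Rightarrow> 'a \<Rightarrow> real"
  assumes indep: "indep_vars (\<lambda>_. borel) V J" and fin: "finite J" and j: "j \<in> J"
    and nat: "\<And>k \<omega>. k \<in> J \<Longrightarrow> \<omega> \<in> space M \<Longrightarrow> V k \<omega> \<in> \<nat>"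
    and sandwich: "AE \<omega> in M. c \<le> V j \<omega> \<and> V j \<omega> \<le> c + 1" and c: "0 \<le> c"
    and s: "0 \<le> s" "s \<le> 1"
  shows "integrable M (\<lambda>\<omega>. V j \<omega> * recip_mean s ((\<Sum>k\<in>J. V k \<omega>) - 1))
    \<and> (\<integral>\<omega>. V j \<omega> \<partial>M) * (\<integral>\<omega>. recip_mean s (\<Sum>k\<in>J. V k \<omega>) \<partial>M)
      \<le> (\<integral>\<omega>. V j \<omega> * recip_mean s ((\<Sum>k\<in>J. V k \<omega>) - 1) \<partial>M)"
proof -
  let ?R = "\<lambda>\<omega>. \<Sum>k\<in>J - {j}. V k \<omega>"
  have VM: "V k \<in> borel_measurable M" if "k \<in> J" for k
    using indep that by (simp add: indep_vars_def)
  have sum_eq: "(\<Sum>k\<in>J. V k \<omega>) = V j \<omega> + ?R \<omega>" for \<omega>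
    using fin j by (simp add: sum.remove)
  have "indep_var borel (V j) borel ?R"
    using indep_var_component_sum[OF indep, of "J - {j}" j "\<lambda>x. x" "\<lambda>x. x"] fin j by auto
  moreover have "0 \<le> ?R \<omega>" if "\<omega> \<in> space M" for \<omega>
    using nat that Nats_eq_0_or_ge_1 by (intro sum_nonneg) force
  ultimately show ?thesis
    unfolding sum_eq using j sandwich nat[OF j] c s
    by (auto intro!: integrable_mult_recip_mean_shift expectation_mult_recip_mean_shift_le
        borel_measurable_sum VM elim: AE_mp simp: add.assoc)
qed

lemma sum_expectation_mult_recip_mean_le_1:
  fixes V :: "'i \<Rightarrow> 'a \<Rightarrow> real" and c :: "'i \<Rightarrow> real"
  assumes indep: "indep_vars (\<lambda>_. borel) V J" and fin: "finite J"
    and nat: "\<And>j \<omega>. j \<in> J \<Longrightarrow> \<omega> \<in> space M \<Longrightarrow> V j \<omega> \<in> \<nat>"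
    and sandwich: "\<And>j. j \<in> J \<Longrightarrow> AE \<omega> in M. c j \<le> V j \<omega> \<and> V j \<omega> \<le> c j + 1"
    and c: "\<And>j. j \<in> J \<Longrightarrow> 0 \<le> c j" and s: "0 \<le> s" "s \<le> 1"
  shows "((\<Sum>j\<in>J. \<integral>\<omega>. V j \<omega> \<partial>M) + s) * (\<integral>\<omega>. recip_mean s (\<Sum>j\<in>J. V j \<omega>) \<partial>M) \<le> 1"
proof -
  define R where "R \<omega> = (\<Sum>j\<in>J. V j \<omega>)" for \<omega>
  have VM [measurable]: "V j \<in> borel_measurable M" if "j \<in> J" for j
    using indep that by (simp add: indep_vars_def)
  have RM [measurable]: "R \<in> borel_measurable M"
    unfolding R_def by (auto intro!: borel_measurable_sum)
  have R_nat: "R \<omega> \<in> \<nat>" if "\<omega> \<in> space M" for \<omega>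
    unfolding R_def by (rule sum_in_Nats) (use nat that in blast)
  then have R_nonneg: "0 \<le> R \<omega>" if "\<omega> \<in> space M" for \<omega>
    using Nats_eq_0_or_ge_1 that by force
  have int_Vj_h: "integrable M (\<lambda>\<omega>. V j \<omega> * recip_mean s (R \<omega> - 1))"
    and bound_Vj: "(\<integral>\<omega>. V j \<omega> \<partial>M) * (\<integral>\<omega>. recip_mean s (R \<omega>) \<partial>M)
      \<le> (\<integral>\<omega>. V j \<omega> * recip_mean s (R \<omega> - 1) \<partial>M)" if j: "j \<in> J" for j
    using summand_mult_recip_mean_le[OF indep fin j nat sandwich[OF j] c[OF j] s] unfolding R_def by auto
  have int_hR: "integrable M (\<lambda>\<omega>. recip_mean s (R \<omega>))"
    by (rule integrable_bounded_on_space[where B=1], measurable)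
       (use R_nonneg recip_mean_nonneg[OF _ s] recip_mean_le_1[OF _ s] in fastforce)
  have R_h_sum: "R \<omega> * recip_mean s (R \<omega> - 1) = (\<Sum>j\<in>J. V j \<omega> * recip_mean s (R \<omega> - 1))" for \<omega>
    unfolding R_def by (rule sum_distrib_right)
  have int_R_h: "integrable M (\<lambda>\<omega>. R \<omega> * recip_mean s (R \<omega> - 1))"
    unfolding R_h_sum using int_Vj_h by simp
  have "(\<Sum>j\<in>J. \<integral>\<omega>. V j \<omega> \<partial>M) * (\<integral>\<omega>. recip_mean s (R \<omega>) \<partial>M)
      \<le> (\<Sum>j\<in>J. \<integral>\<omega>. V j \<omega> * recip_mean s (R \<omega> - 1) \<partial>M)"
    unfolding sum_distrib_right by (rule sum_mono) (rule bound_Vj)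
  also have "\<dots> = (\<integral>\<omega>. R \<omega> * recip_mean s (R \<omega> - 1) \<partial>M)"
    unfolding R_h_sum using int_Vj_h by simp
  finally have "((\<Sum>j\<in>J. \<integral>\<omega>. V j \<omega> \<partial>M) + s) * (\<integral>\<omega>. recip_mean s (R \<omega>) \<partial>M)
      \<le> (\<integral>\<omega>. R \<omega> * recip_mean s (R \<omega> - 1) + s * recip_mean s (R \<omega>) \<partial>M)"
    using int_R_h int_hR by (simp add: distrib_right)
  also have "\<dots> \<le> (\<integral>\<omega>. 1 \<partial>M)"
    using int_R_h int_hR recip_mean_balance[OF R_nat s] by (intro integral_mono) auto
  finally show ?thesis
    unfolding R_def by (simp add: prob_space)
qed

lemma integral_01_bounds:
  fixes Z :: "'a \<Rightarrow> real"
  assumes "Z \<in> borel_measurable M" "\<And>\<omega>. \<omega> \<in> space M \<Longrightarrow> Z \<omega> \<in> {0, 1}"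
  shows "0 \<le> (\<integral>\<omega>. Z \<omega> \<partial>M) \<and> (\<integral>\<omega>. Z \<omega> \<partial>M) \<le> 1"
proof
  show "0 \<le> (\<integral>\<omega>. Z \<omega> \<partial>M)"
    by (intro integral_nonneg_AE AE_I2) (auto dest!: assms(2))
  have "(\<integral>\<omega>. Z \<omega> \<partial>M) \<le> (\<integral>\<omega>. 1 \<partial>M)"
    using assms(1) by (intro integral_mono integrable_bounded_on_space[where B=1]) (auto dest!: assms(2))
  then show "(\<integral>\<omega>. Z \<omega> \<partial>M) \<le> 1"
    by (simp add: prob_space)
qed

lemma integral_mult_comonotone_01:
  fixes A B :: "'a \<Rightarrow> real"
  assumes meas: "A \<in> borel_measurable M" "B \<in> borel_measurable M"
    and vals: "\<And>\<omega>. \<omega> \<in> space M \<Longrightarrow> A \<omega> \<in> {0, 1} \<and> B \<omega> \<in> {0, 1}"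
    and como: "(AE \<omega> in M. A \<omega> \<le> B \<omega>) \<or> (AE \<omega> in M. B \<omega> \<le> A \<omega>)"
  shows "(\<integral>\<omega>. A \<omega> * B \<omega> \<partial>M) = min (\<integral>\<omega>. A \<omega> \<partial>M) (\<integral>\<omega>. B \<omega> \<partial>M)"
proof -
  have int: "integrable M A" "integrable M B"
    using meas vals by (auto intro!: integrable_bounded_on_space[where B=1] dest!: vals)
  note [measurable] = meas
  from como show ?thesis
  proof
    assume le: "AE \<omega> in M. A \<omega> \<le> B \<omega>"
    have "(\<integral>\<omega>. A \<omega> * B \<omega> \<partial>M) = (\<integral>\<omega>. A \<omega> \<partial>M)"
    proof (rule integral_cong_AE)
      show "AE \<omega> in M. A \<omega> * B \<omega> = A \<omega>"
        using le AE_space by eventually_elim (use vals in fastforce)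
    qed measurable
    moreover have "(\<integral>\<omega>. A \<omega> \<partial>M) \<le> (\<integral>\<omega>. B \<omega> \<partial>M)"
      using int le by (rule integral_mono_AE)
    ultimately show ?thesis by simp
  next
    assume le: "AE \<omega> in M. B \<omega> \<le> A \<omega>"
    have "(\<integral>\<omega>. A \<omega> * B \<omega> \<partial>M) = (\<integral>\<omega>. B \<omega> \<partial>M)"
    proof (rule integral_cong_AE)
      show "AE \<omega> in M. A \<omega> * B \<omega> = B \<omega>"
        using le AE_space by eventually_elim (use vals in fastforce)
    qed measurable
    moreover have "(\<integral>\<omega>. B \<omega> \<partial>M) \<le> (\<integral>\<omega>. A \<omega> \<partial>M)"
      using int le by (intro integral_mono_AE)
    ultimately show ?thesis by simp
  qed
qed

lemma integral_share_complement:
  fixes A B :: "'a \<Rightarrow> real"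
  assumes meas: "A \<in> borel_measurable M" "B \<in> borel_measurable M"
    and nonneg: "\<And>\<omega>. \<omega> \<in> space M \<Longrightarrow> 0 \<le> A \<omega> \<and> 0 \<le> B \<omega>"
  shows "(\<integral>\<omega>. (if A \<omega> + B \<omega> = 0 then 1 else A \<omega> / (A \<omega> + B \<omega>)) \<partial>M)
    = 1 - (\<integral>\<omega>. B \<omega> / (A \<omega> + B \<omega>) \<partial>M)"
proof -
  have "(if A \<omega> + B \<omega> = 0 then 1 else A \<omega> / (A \<omega> + B \<omega>)) = 1 - B \<omega> / (A \<omega> + B \<omega>)" for \<omega>
    by (cases "A \<omega> + B \<omega> = 0") (simp_all add: field_simps)
  moreover have "integrable M (\<lambda>\<omega>. B \<omega> / (A \<omega> + B \<omega>))"
  proof (rule integrable_bounded_on_space[where B=1])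
    note [measurable] = meas
    show "(\<lambda>\<omega>. B \<omega> / (A \<omega> + B \<omega>)) \<in> borel_measurable M"
      by measurable
    show "\<bar>B \<omega> / (A \<omega> + B \<omega>)\<bar> \<le> 1" if "\<omega> \<in> space M" for \<omega>
    proof -
      from nonneg[OF that] have "0 < A \<omega> + B \<omega> \<or> A \<omega> + B \<omega> = 0"
        by (metis add_nonneg_nonneg order_le_less)
      with nonneg[OF that] have "0 \<le> B \<omega> / (A \<omega> + B \<omega>)" "B \<omega> / (A \<omega> + B \<omega>) \<le> 1"
        by (auto simp: divide_le_eq_1)
      then show ?thesis
        by (intro abs_leI) linarith+
    qed
  qed
  ultimately show ?thesis
    by (simp add: prob_space)
qed

lemma comonotone_if_common_threshold:
  fixes A B \<theta> :: "'a \<Rightarrow> real"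
  assumes "AE \<omega> in M. A \<omega> = (if \<theta> \<omega> < a then 1 else 0) \<and> B \<omega> = (if \<theta> \<omega> < b then 1 else 0)"
  shows "(AE \<omega> in M. A \<omega> \<le> B \<omega>) \<or> (AE \<omega> in M. B \<omega> \<le> A \<omega>)"
proof (cases "a \<le> b")
  case True
  from assms have "AE \<omega> in M. A \<omega> \<le> B \<omega>"
    by eventually_elim (use True in auto)
  then show ?thesis ..
next
  case False
  from assms have "AE \<omega> in M. B \<omega> \<le> A \<omega>"
    by eventually_elim (use False in auto)
  then show ?thesis ..
qed

end

locale bernoulli_triples = prob_space +
  fixes n :: nat and X Y Y' :: "nat \<Rightarrow> 'a \<Rightarrow> real"
  assumes bernoulli: "\<And>i \<omega>. i < n \<Longrightarrow> \<omega> \<in> space M \<Longrightarrow>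
      X i \<omega> \<in> {0, 1} \<and> Y i \<omega> \<in> {0, 1} \<and> Y' i \<omega> \<in> {0, 1}"
    and indep_triples: "indep_vars (\<lambda>_. borel) (\<lambda>i \<omega>. (X i \<omega>, Y i \<omega>, Y' i \<omega>)) {..<n}"
begin

definition total :: "nat \<Rightarrow> 'a \<Rightarrow> real" where
  "total i \<omega> = X i \<omega> + Y i \<omega> + Y' i \<omega>"

definition rest :: "nat \<Rightarrow> 'a \<Rightarrow> real" where
  "rest i \<omega> = (\<Sum>j\<in>{..<n} - {i}. total j \<omega>)"

definition rest_recip :: "real \<Rightarrow> nat \<Rightarrow> real" where
  "rest_recip k i = (\<integral>\<omega>. 1 / (k + rest i \<omega>) \<partial>M)"

definition mean_total :: real where
  "mean_total = (\<Sum>j<n. \<integral>\<omega>. total j \<omega> \<partial>M)"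

lemma triple_fun_measurable:
  assumes "i < n" "continuous_on UNIV f"
  shows "(\<lambda>\<omega>. f (X i \<omega>, Y i \<omega>, Y' i \<omega>)) \<in> borel_measurable M"
proof (rule measurable_compose[OF _ borel_measurable_continuous_onI[OF assms(2)]])
  show "(\<lambda>\<omega>. (X i \<omega>, Y i \<omega>, Y' i \<omega>)) \<in> borel_measurable M"
    using indep_triples assms(1) by (simp add: indep_vars_def)
qed

lemma
  assumes "i < n"
  shows X_measurable [measurable]: "X i \<in> borel_measurable M"
    and Y_measurable [measurable]: "Y i \<in> borel_measurable M"
    and Y'_measurable [measurable]: "Y' i \<in> borel_measurable M"
  using triple_fun_measurable[OF assms, of fst] triple_fun_measurable[OF assms, of "\<lambda>t. fst (snd t)"]
    triple_fun_measurable[OF assms, of "\<lambda>t. snd (snd t)"]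
  by (simp_all add: continuous_on_fst continuous_on_snd continuous_on_id)

lemma
  assumes "i < n"
  shows X_integrable: "integrable M (X i)"
    and Y_integrable: "integrable M (Y i)"
    and Y'_integrable: "integrable M (Y' i)"
  using assms by (auto intro!: integrable_bounded_on_space[where B=1] dest!: bernoulli[OF assms])

lemma AE_bernoulli: "i < n \<Longrightarrow> AE \<omega> in M. X i \<omega> \<in> {0, 1} \<and> Y i \<omega> \<in> {0, 1} \<and> Y' i \<omega> \<in> {0, 1}"
  using bernoulli by (intro AE_I2) auto

lemma total_Nats: "i < n \<Longrightarrow> \<omega> \<in> space M \<Longrightarrow> total i \<omega> \<in> \<nat>"
  using bernoulli[of i \<omega>] unfolding total_def by auto

lemma bernoulli_nonneg: "i < n \<Longrightarrow> \<omega> \<in> space M \<Longrightarrow> 0 \<le> X i \<omega> \<and> 0 \<le> Y i \<omega> \<and> 0 \<le> Y' i \<omega>"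
  using bernoulli[of i \<omega>] by auto

lemma total_nonneg: "i < n \<Longrightarrow> \<omega> \<in> space M \<Longrightarrow> 0 \<le> total i \<omega>"
  using bernoulli_nonneg[of i \<omega>] unfolding total_def by auto

lemma rest_nonneg: "\<omega> \<in> space M \<Longrightarrow> 0 \<le> rest i \<omega>"
  unfolding rest_def by (auto intro!: sum_nonneg total_nonneg)

lemma total_measurable [measurable]: "i < n \<Longrightarrow> total i \<in> borel_measurable M"
  unfolding total_def by measurable

lemma rest_measurable [measurable]: "rest i \<in> borel_measurable M"
  unfolding rest_def total_def by (auto intro!: borel_measurable_sum)

lemma sum_total_eq: "i < n \<Longrightarrow> (\<Sum>j<n. total j \<omega>) = total i \<omega> + rest i \<omega>"
  unfolding rest_def by (simp add: sum.remove)

lemma indep_totals: "indep_vars (\<lambda>_. borel) total {..<n}"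
proof -
  have "indep_vars (\<lambda>_. borel) (\<lambda>i \<omega>. (\<lambda>t. fst t + fst (snd t) + snd (snd t)) (X i \<omega>, Y i \<omega>, Y' i \<omega>)) {..<n}"
    by (rule indep_vars_compose2[OF indep_triples]) (intro borel_measurable_continuous_onI continuous_intros)
  then show ?thesis
    by (simp add: total_def[abs_def])
qed

lemma integrable_recip_rest: "1 \<le> k \<Longrightarrow> integrable M (\<lambda>\<omega>. 1 / (k + rest i \<omega>))"
  by (rule integrable_bounded_on_space[where B=1], measurable)
     (auto dest!: rest_nonneg[of _ i] simp: divide_le_eq)

lemma
  fixes f :: "real \<times> real \<times> real \<Rightarrow> real"
  assumes i: "i < n" and f: "continuous_on UNIV f" and k: "1 \<le> k"
    and bound: "\<And>\<omega>. \<omega> \<in> space M \<Longrightarrow> \<bar>f (X i \<omega>, Y i \<omega>, Y' i \<omega>)\<bar> \<le> B"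
  shows integrable_divide_rest: "integrable M (\<lambda>\<omega>. f (X i \<omega>, Y i \<omega>, Y' i \<omega>) / (k + rest i \<omega>))"
    and integral_divide_rest: "(\<integral>\<omega>. f (X i \<omega>, Y i \<omega>, Y' i \<omega>) / (k + rest i \<omega>) \<partial>M)
      = (\<integral>\<omega>. f (X i \<omega>, Y i \<omega>, Y' i \<omega>) \<partial>M) * (\<integral>\<omega>. 1 / (k + rest i \<omega>) \<partial>M)"
proof -
  have fM: "f \<in> borel_measurable borel"
    using f by (rule borel_measurable_continuous_onI)
  have "(\<lambda>t :: real \<times> real \<times> real. fst t + fst (snd t) + snd (snd t)) \<in> borel_measurable borel"
    by (intro borel_measurable_continuous_onI continuous_intros)
  from indep_var_component_sum[OF indep_triples _ _ _ _ fM this, of "{..<n} - {i}" i]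
  have indep: "indep_var borel (\<lambda>\<omega>. f (X i \<omega>, Y i \<omega>, Y' i \<omega>)) borel (rest i)"
    using i by (simp add: rest_def[abs_def] total_def)
  have int: "integrable M (\<lambda>\<omega>. f (X i \<omega>, Y i \<omega>, Y' i \<omega>))"
    using triple_fun_measurable[OF i f] bound by (rule integrable_bounded_on_space)
  have "indep_var borel (id \<circ> (\<lambda>\<omega>. f (X i \<omega>, Y i \<omega>, Y' i \<omega>))) borel ((\<lambda>r. 1 / (k + r)) \<circ> rest i)"
    using indep by (rule indep_var_compose) auto
  from indep_var_integrable[OF this] int integrable_recip_rest[OF k]
  show "integrable M (\<lambda>\<omega>. f (X i \<omega>, Y i \<omega>, Y' i \<omega>) / (k + rest i \<omega>))"
    by (simp add: comp_def)
  from indep_var_integral_mult_compose[OF indep _ int integrable_recip_rest[OF k]]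
  show "(\<integral>\<omega>. f (X i \<omega>, Y i \<omega>, Y' i \<omega>) / (k + rest i \<omega>) \<partial>M)
      = (\<integral>\<omega>. f (X i \<omega>, Y i \<omega>, Y' i \<omega>) \<partial>M) * (\<integral>\<omega>. 1 / (k + rest i \<omega>) \<partial>M)"
    by simp
qed

lemma integral_share_eq:
  fixes f g :: "real \<times> real \<times> real \<Rightarrow> real"
  assumes i: "i < n" and cont: "continuous_on UNIV f" "continuous_on UNIV g"
    and bound: "\<And>\<omega>. \<omega> \<in> space M \<Longrightarrow> \<bar>f (X i \<omega>, Y i \<omega>, Y' i \<omega>)\<bar> \<le> B"
      "\<And>\<omega>. \<omega> \<in> space M \<Longrightarrow> \<bar>g (X i \<omega>, Y i \<omega>, Y' i \<omega>)\<bar> \<le> B"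
    and F: "F \<in> borel_measurable M"
    and split: "AE \<omega> in M. F \<omega> / (total i \<omega> + rest i \<omega>)
      = f (X i \<omega>, Y i \<omega>, Y' i \<omega>) / (2 + rest i \<omega>) + g (X i \<omega>, Y i \<omega>, Y' i \<omega>) / (1 + rest i \<omega>)"
  shows "(\<integral>\<omega>. F \<omega> / (total i \<omega> + rest i \<omega>) \<partial>M)
    = (\<integral>\<omega>. f (X i \<omega>, Y i \<omega>, Y' i \<omega>) \<partial>M) * rest_recip 2 i
      + (\<integral>\<omega>. g (X i \<omega>, Y i \<omega>, Y' i \<omega>) \<partial>M) * rest_recip 1 i"
proof -
  have [measurable]: "(\<lambda>\<omega>. f (X i \<omega>, Y i \<omega>, Y' i \<omega>)) \<in> borel_measurable M"
    "(\<lambda>\<omega>. g (X i \<omega>, Y i \<omega>, Y' i \<omega>)) \<in> borel_measurable M"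
    using triple_fun_measurable[OF i] cont by auto
  note [measurable] = F total_measurable[OF i]
  have "(\<integral>\<omega>. F \<omega> / (total i \<omega> + rest i \<omega>) \<partial>M)
    = (\<integral>\<omega>. f (X i \<omega>, Y i \<omega>, Y' i \<omega>) / (2 + rest i \<omega>)
         + g (X i \<omega>, Y i \<omega>, Y' i \<omega>) / (1 + rest i \<omega>) \<partial>M)"
    by (rule integral_cong_AE[OF _ _ split]; measurable)
  also have "\<dots> = (\<integral>\<omega>. f (X i \<omega>, Y i \<omega>, Y' i \<omega>) / (2 + rest i \<omega>) \<partial>M)
      + (\<integral>\<omega>. g (X i \<omega>, Y i \<omega>, Y' i \<omega>) / (1 + rest i \<omega>) \<partial>M)"
    using bound by (intro Bochner_Integration.integral_add integrable_divide_rest[OF i] cont) auto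
  finally show ?thesis
    by (simp add: integral_divide_rest[OF i cont(1) _ bound(1)] integral_divide_rest[OF i cont(2) _ bound(2)]
        rest_recip_def)
qed

lemma
  assumes "i < n"
  shows X_expectation_bounds: "0 \<le> (\<integral>\<omega>. X i \<omega> \<partial>M) \<and> (\<integral>\<omega>. X i \<omega> \<partial>M) \<le> 1"
    and Y_expectation_bounds: "0 \<le> (\<integral>\<omega>. Y i \<omega> \<partial>M) \<and> (\<integral>\<omega>. Y i \<omega> \<partial>M) \<le> 1"
    and Y'_expectation_bounds: "0 \<le> (\<integral>\<omega>. Y' i \<omega> \<partial>M) \<and> (\<integral>\<omega>. Y' i \<omega> \<partial>M) \<le> 1"
  using assms bernoulli[OF assms] by (auto intro!: integral_01_bounds)

lemma rest_recip_bounds: "0 \<le> rest_recip 2 i \<and> rest_recip 2 i \<le> rest_recip 1 i"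
  unfolding rest_recip_def
  by (auto intro!: integral_nonneg_AE AE_I2 integral_mono integrable_recip_rest divide_left_mono
      dest!: rest_nonneg[of _ i])

lemma mean_total_split:
  assumes i: "i < n"
  shows "mean_total = (\<integral>\<omega>. X i \<omega> \<partial>M) + (\<integral>\<omega>. Y i \<omega> \<partial>M) + (\<integral>\<omega>. Y' i \<omega> \<partial>M)
    + (\<Sum>j\<in>{..<n} - {i}. \<integral>\<omega>. total j \<omega> \<partial>M)"
  using i X_integrable[OF i] Y_integrable[OF i] Y'_integrable[OF i]
  by (simp add: mean_total_def sum.remove total_def)

end

text \<open>Hypothesis (b) enters only through \<open>X\<^sub>i + Y\<^sub>i = 1\<close> and the comonotonicity of \<open>X\<^sub>i\<close>
  and \<open>Y'\<^sub>i\<close>.\<close>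

locale coupled_bernoulli_triples = bernoulli_triples +
  assumes disjoint: "\<And>i. i < n \<Longrightarrow> AE \<omega> in M. X i \<omega> * Y i \<omega> = 0"
    and coupled: "\<And>i. i < n \<Longrightarrow> (AE \<omega> in M. Y' i \<omega> = 0) \<or>
      (AE \<omega> in M. X i \<omega> + Y i \<omega> = 1) \<and>
      ((AE \<omega> in M. X i \<omega> \<le> Y' i \<omega>) \<or> (AE \<omega> in M. Y' i \<omega> \<le> X i \<omega>))"

context bernoulli_triples
begin

lemma coupled_bernoulli_triplesI:
  assumes disj: "\<forall>i<n. (\<integral>\<omega>. X i \<omega> * Y i \<omega> \<partial>M) = 0"
    and cases: "\<forall>i<n. (\<integral>\<omega>. Y' i \<omega> \<partial>M) = 0 \<or>
       ((\<integral>\<omega>. Y i \<omega> \<partial>M) = 1 - (\<integral>\<omega>. X i \<omega> \<partial>M) \<and>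
        (\<exists>\<theta> :: 'a \<Rightarrow> real. \<theta> \<in> borel_measurable M \<and>
            distr M lborel \<theta> = uniform_measure lborel {0..1} \<and>
            (AE \<omega> in M. X i \<omega> = (if \<theta> \<omega> < (\<integral>\<omega>. X i \<omega> \<partial>M) then 1 else 0) \<and>
                          Y' i \<omega> = (if \<theta> \<omega> < (\<integral>\<omega>. Y' i \<omega> \<partial>M) then 1 else 0))))"
  shows "coupled_bernoulli_triples M n X Y Y'"
proof unfold_locales
  fix i assume i: "i < n"
  note [measurable] = X_measurable[OF i] Y_measurable[OF i] Y'_measurable[OF i]
  have "integrable M (\<lambda>\<omega>. X i \<omega> * Y i \<omega>)"
    by (rule integrable_bounded_on_space[where B=1], measurable) (auto dest!: bernoulli[OF i])
  moreover have "AE \<omega> in M. 0 \<le> X i \<omega> * Y i \<omega>"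
    using AE_bernoulli[OF i] by eventually_elim auto
  ultimately show disjoint: "AE \<omega> in M. X i \<omega> * Y i \<omega> = 0"
    using disj i integral_nonneg_eq_0_iff_AE by blast
  from cases i show "(AE \<omega> in M. Y' i \<omega> = 0) \<or> (AE \<omega> in M. X i \<omega> + Y i \<omega> = 1) \<and>
      ((AE \<omega> in M. X i \<omega> \<le> Y' i \<omega>) \<or> (AE \<omega> in M. Y' i \<omega> \<le> X i \<omega>))"
  proof (elim allE impE disjE conjE exE)
    assume "(\<integral>\<omega>. Y' i \<omega> \<partial>M) = 0"
    moreover have "AE \<omega> in M. 0 \<le> Y' i \<omega>"
      using AE_bernoulli[OF i] by eventually_elim auto
    ultimately have "AE \<omega> in M. Y' i \<omega> = 0"
      using Y'_integrable[OF i] by (simp add: integral_nonneg_eq_0_iff_AE)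
    then show ?thesis ..
  next
    fix \<theta> :: "'a \<Rightarrow> real"
    assume q: "(\<integral>\<omega>. Y i \<omega> \<partial>M) = 1 - (\<integral>\<omega>. X i \<omega> \<partial>M)"
      and threshold: "AE \<omega> in M. X i \<omega> = (if \<theta> \<omega> < (\<integral>\<omega>. X i \<omega> \<partial>M) then 1 else 0) \<and>
                          Y' i \<omega> = (if \<theta> \<omega> < (\<integral>\<omega>. Y' i \<omega> \<partial>M) then 1 else 0)"
    have "AE \<omega> in M. X i \<omega> + Y i \<omega> \<le> 1"
      using disjoint AE_bernoulli[OF i] by eventually_elim auto
    then have "AE \<omega> in M. X i \<omega> + Y i \<omega> = 1"
      using X_integrable[OF i] Y_integrable[OF i] q
      by (intro integral_bounded_eq_bound_then_AE) (auto simp: prob_space)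
    with comonotone_if_common_threshold[OF threshold] show ?thesis
      by blast
  qed (use i in auto)
qed

end

section \<open>Disjoint and coupled triples\<close>

context coupled_bernoulli_triples
begin

lemma expectation_X_share:
  assumes i: "i < n"
  shows "(\<integral>\<omega>. X i \<omega> / (total i \<omega> + rest i \<omega>) \<partial>M)
    = (\<integral>\<omega>. X i \<omega> * Y' i \<omega> \<partial>M) * rest_recip 2 i
      + (\<integral>\<omega>. X i \<omega> * (1 - Y' i \<omega>) \<partial>M) * rest_recip 1 i"
proof -
  have "AE \<omega> in M. X i \<omega> / (total i \<omega> + rest i \<omega>)
      = X i \<omega> * Y' i \<omega> / (2 + rest i \<omega>) + X i \<omega> * (1 - Y' i \<omega>) / (1 + rest i \<omega>)"
    using disjoint[OF i] AE_bernoulli[OF i] by eventually_elim (auto simp: total_def)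
  then show ?thesis
    by (intro integral_share_eq[OF i, where f="\<lambda>t. fst t * snd (snd t)"
          and g="\<lambda>t. fst t * (1 - snd (snd t))" and B=1, simplified])
       (auto intro!: continuous_intros borel_measurable_add X_measurable Y_measurable Y'_measurable
         dest!: bernoulli[OF i] simp: i)
qed

lemma expectation_Y_share:
  assumes i: "i < n"
  shows "(\<integral>\<omega>. (Y i \<omega> + Y' i \<omega>) / (total i \<omega> + rest i \<omega>) \<partial>M)
    = (\<integral>\<omega>. Y' i \<omega> * (Y i \<omega> + 1) \<partial>M) * rest_recip 2 i
      + (\<integral>\<omega>. (1 - Y' i \<omega>) * Y i \<omega> \<partial>M) * rest_recip 1 i"
proof -
  have "AE \<omega> in M. Y' i \<omega> = 0 \<or> X i \<omega> + Y i \<omega> = 1"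
    using coupled[OF i] by (auto elim: AE_mp)
  then have "AE \<omega> in M. (Y i \<omega> + Y' i \<omega>) / (total i \<omega> + rest i \<omega>)
      = Y' i \<omega> * (Y i \<omega> + 1) / (2 + rest i \<omega>) + (1 - Y' i \<omega>) * Y i \<omega> / (1 + rest i \<omega>)"
    using disjoint[OF i] AE_bernoulli[OF i] by eventually_elim (auto simp: total_def)
  then show ?thesis
    by (intro integral_share_eq[OF i, where f="\<lambda>t. snd (snd t) * (fst (snd t) + 1)"
          and g="\<lambda>t. (1 - snd (snd t)) * fst (snd t)" and B=2, simplified])
       (auto intro!: continuous_intros borel_measurable_add X_measurable Y_measurable Y'_measurable
         dest!: bernoulli[OF i] simp: i)
qed

definition base :: "nat \<Rightarrow> real" where
  "base j = (if AE \<omega> in M. Y' j \<omega> = 0 then 0 else 1)"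

lemma base_nonneg: "0 \<le> base j"
  by (simp add: base_def)

lemma total_base_bounds:
  assumes j: "j < n"
  shows "AE \<omega> in M. base j \<le> total j \<omega> \<and> total j \<omega> \<le> base j + 1"
proof (cases "AE \<omega> in M. Y' j \<omega> = 0")
  case True
  then have base: "base j = 0"
    by (simp add: base_def)
  from True disjoint[OF j] AE_bernoulli[OF j] show ?thesis
    by eventually_elim (auto simp: total_def base)
next
  case False
  then have base: "base j = 1"
    by (simp add: base_def)
  from False coupled[OF j] have "AE \<omega> in M. X j \<omega> + Y j \<omega> = 1"
    by auto
  with AE_bernoulli[OF j] show ?thesis
    by eventually_elim (auto simp: total_def base)
qed

lemma rest_recip_le_1:
  assumes i: "i < n"
  defines "s \<equiv> \<integral>\<omega>. Y' i \<omega> \<partial>M"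
  shows "((\<Sum>j\<in>{..<n} - {i}. \<integral>\<omega>. total j \<omega> \<partial>M) + s) * (s * rest_recip 2 i + (1 - s) * rest_recip 1 i) \<le> 1"
proof -
  have s: "0 \<le> s" "s \<le> 1"
    using Y'_expectation_bounds[OF i] by (auto simp: s_def)
  have "(\<integral>\<omega>. recip_mean s (rest i \<omega>) \<partial>M) = s * rest_recip 2 i + (1 - s) * rest_recip 1 i"
  proof -
    have "recip_mean s r = s * (1 / (2 + r)) + (1 - s) * (1 / (1 + r))" for r
      by (simp add: recip_mean_def)
    then show ?thesis
      using integrable_recip_rest[of 1 i] integrable_recip_rest[of 2 i] unfolding rest_recip_def
      by (simp only: Bochner_Integration.integral_add integrable_mult_right integral_mult_right_zero)
  qed
  moreover have "((\<Sum>j\<in>{..<n} - {i}. \<integral>\<omega>. total j \<omega> \<partial>M) + s)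
      * (\<integral>\<omega>. recip_mean s (rest i \<omega>) \<partial>M) \<le> 1"
    unfolding rest_def
    by (rule sum_expectation_mult_recip_mean_le_1[where c=base, OF indep_vars_subset[OF indep_totals]])
       (auto intro: total_Nats total_base_bounds s base_nonneg simp del: AE_conj_iff)
  ultimately show ?thesis
    by simp
qed

lemma share_bounds_if_null:
  assumes i: "i < n" and T: "1 < mean_total" and null: "AE \<omega> in M. Y' i \<omega> = 0"
  shows "(\<integral>\<omega>. X i \<omega> / (total i \<omega> + rest i \<omega>) \<partial>M) \<le> (\<integral>\<omega>. X i \<omega> \<partial>M) / (mean_total - 1)"
    and "(\<integral>\<omega>. (Y i \<omega> + Y' i \<omega>) / (total i \<omega> + rest i \<omega>) \<partial>M)
      \<le> ((\<integral>\<omega>. Y i \<omega> \<partial>M) + (\<integral>\<omega>. Y' i \<omega> \<partial>M)) / (mean_total - 1)"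
proof -
  note [measurable] = X_measurable[OF i] Y_measurable[OF i] Y'_measurable[OF i]
  have cong: "(\<integral>\<omega>. f \<omega> \<partial>M) = (\<integral>\<omega>. g \<omega> \<partial>M)"
    if "\<And>\<omega>. Y' i \<omega> = 0 \<Longrightarrow> f \<omega> = g \<omega>" "f \<in> borel_measurable M" "g \<in> borel_measurable M" for f g
  proof (rule integral_cong_AE[OF that(2,3)])
    show "AE \<omega> in M. f \<omega> = g \<omega>"
      using null by eventually_elim (rule that(1))
  qed
  have s: "(\<integral>\<omega>. Y' i \<omega> \<partial>M) = 0"
    using cong[of "Y' i" "\<lambda>_. 0"] by simp
  have X_share: "(\<integral>\<omega>. X i \<omega> / (total i \<omega> + rest i \<omega>) \<partial>M) = (\<integral>\<omega>. X i \<omega> \<partial>M) * rest_recip 1 i"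
    using expectation_X_share[OF i] cong[of "\<lambda>\<omega>. X i \<omega> * Y' i \<omega>" "\<lambda>_. 0"]
      cong[of "\<lambda>\<omega>. X i \<omega> * (1 - Y' i \<omega>)" "X i"] by simp
  have Y_share: "(\<integral>\<omega>. (Y i \<omega> + Y' i \<omega>) / (total i \<omega> + rest i \<omega>) \<partial>M) = (\<integral>\<omega>. Y i \<omega> \<partial>M) * rest_recip 1 i"
    using expectation_Y_share[OF i] cong[of "\<lambda>\<omega>. Y' i \<omega> * (Y i \<omega> + 1)" "\<lambda>_. 0"]
      cong[of "\<lambda>\<omega>. (1 - Y' i \<omega>) * Y i \<omega>" "Y i"] by simp
  define m where "m = (\<Sum>j\<in>{..<n} - {i}. \<integral>\<omega>. total j \<omega> \<partial>M)"
  have K: "m * rest_recip 1 i \<le> 1"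
    using rest_recip_le_1[OF i] by (simp add: s m_def)
  have "(\<integral>\<omega>. X i \<omega> + Y i \<omega> \<partial>M) \<le> (\<integral>\<omega>. 1 \<partial>M)"
  proof (rule integral_mono_AE)
    show "AE \<omega> in M. X i \<omega> + Y i \<omega> \<le> 1"
      using disjoint[OF i] AE_bernoulli[OF i] by eventually_elim auto
  qed (use X_integrable[OF i] Y_integrable[OF i] in auto)
  then have "mean_total - 1 \<le> m"
    using mean_total_split[OF i] X_integrable[OF i] Y_integrable[OF i] by (simp add: s m_def prob_space)
  with T K rest_recip_bounds[of i] X_expectation_bounds[OF i] Y_expectation_bounds[OF i]
  show "(\<integral>\<omega>. X i \<omega> / (total i \<omega> + rest i \<omega>) \<partial>M) \<le> (\<integral>\<omega>. X i \<omega> \<partial>M) / (mean_total - 1)"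
    and "(\<integral>\<omega>. (Y i \<omega> + Y' i \<omega>) / (total i \<omega> + rest i \<omega>) \<partial>M)
      \<le> ((\<integral>\<omega>. Y i \<omega> \<partial>M) + (\<integral>\<omega>. Y' i \<omega> \<partial>M)) / (mean_total - 1)"
    unfolding X_share Y_share s by (auto intro!: null_share_le)
qed

lemma coupled_moments:
  assumes i: "i < n" and sum1: "AE \<omega> in M. X i \<omega> + Y i \<omega> = 1"
    and como: "(AE \<omega> in M. X i \<omega> \<le> Y' i \<omega>) \<or> (AE \<omega> in M. Y' i \<omega> \<le> X i \<omega>)"
  defines "p \<equiv> \<integral>\<omega>. X i \<omega> \<partial>M" and "s \<equiv> \<integral>\<omega>. Y' i \<omega> \<partial>M"
  shows "(\<integral>\<omega>. Y i \<omega> \<partial>M) = 1 - p"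
    and "(\<integral>\<omega>. X i \<omega> * Y' i \<omega> \<partial>M) = min p s"
    and "(\<integral>\<omega>. X i \<omega> * (1 - Y' i \<omega>) \<partial>M) = p - min p s"
    and "(\<integral>\<omega>. Y' i \<omega> * (Y i \<omega> + 1) \<partial>M) = 2 * s - min p s"
    and "(\<integral>\<omega>. (1 - Y' i \<omega>) * Y i \<omega> \<partial>M) = 1 - s - p + min p s"
proof -
  note [measurable] = X_measurable[OF i] Y_measurable[OF i] Y'_measurable[OF i]
  note int = X_integrable[OF i] Y_integrable[OF i] Y'_integrable[OF i]
  have int_XY': "integrable M (\<lambda>\<omega>. X i \<omega> * Y' i \<omega>)"
    by (rule integrable_bounded_on_space[where B=1], measurable) (auto dest!: bernoulli[OF i])
  show XY': "(\<integral>\<omega>. X i \<omega> * Y' i \<omega> \<partial>M) = min p s"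
    unfolding p_def s_def using bernoulli[OF i] como by (intro integral_mult_comonotone_01) auto
  have cong: "(\<integral>\<omega>. f \<omega> \<partial>M) = (\<integral>\<omega>. g \<omega> \<partial>M)"
    if "\<And>\<omega>. X i \<omega> + Y i \<omega> = 1 \<Longrightarrow> X i \<omega> \<in> {0, 1} \<Longrightarrow> Y' i \<omega> \<in> {0, 1} \<Longrightarrow> f \<omega> = g \<omega>"
      "f \<in> borel_measurable M" "g \<in> borel_measurable M" for f g
  proof (rule integral_cong_AE[OF that(2,3)])
    show "AE \<omega> in M. f \<omega> = g \<omega>"
      using sum1 AE_bernoulli[OF i] by eventually_elim (rule that(1); simp)
  qed
  have "(\<integral>\<omega>. Y i \<omega> \<partial>M) = (\<integral>\<omega>. 1 - X i \<omega> \<partial>M)"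
    "(\<integral>\<omega>. X i \<omega> * (1 - Y' i \<omega>) \<partial>M) = (\<integral>\<omega>. X i \<omega> - X i \<omega> * Y' i \<omega> \<partial>M)"
    "(\<integral>\<omega>. Y' i \<omega> * (Y i \<omega> + 1) \<partial>M) = (\<integral>\<omega>. 2 * Y' i \<omega> - X i \<omega> * Y' i \<omega> \<partial>M)"
    "(\<integral>\<omega>. (1 - Y' i \<omega>) * Y i \<omega> \<partial>M) = (\<integral>\<omega>. 1 - Y' i \<omega> - X i \<omega> + X i \<omega> * Y' i \<omega> \<partial>M)"
    by (rule cong; auto)+
  with int int_XY' XY' show "(\<integral>\<omega>. Y i \<omega> \<partial>M) = 1 - p"
    and "(\<integral>\<omega>. X i \<omega> * (1 - Y' i \<omega>) \<partial>M) = p - min p s"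
    and "(\<integral>\<omega>. Y' i \<omega> * (Y i \<omega> + 1) \<partial>M) = 2 * s - min p s"
    and "(\<integral>\<omega>. (1 - Y' i \<omega>) * Y i \<omega> \<partial>M) = 1 - s - p + min p s"
    by (simp_all add: p_def s_def prob_space)
qed

lemma share_bounds_if_coupled:
  assumes i: "i < n" and T: "1 < mean_total" and sum1: "AE \<omega> in M. X i \<omega> + Y i \<omega> = 1"
    and como: "(AE \<omega> in M. X i \<omega> \<le> Y' i \<omega>) \<or> (AE \<omega> in M. Y' i \<omega> \<le> X i \<omega>)"
  shows "(\<integral>\<omega>. X i \<omega> / (total i \<omega> + rest i \<omega>) \<partial>M) \<le> (\<integral>\<omega>. X i \<omega> \<partial>M) / (mean_total - 1)"
    and "(\<integral>\<omega>. (Y i \<omega> + Y' i \<omega>) / (total i \<omega> + rest i \<omega>) \<partial>M)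
      \<le> ((\<integral>\<omega>. Y i \<omega> \<partial>M) + (\<integral>\<omega>. Y' i \<omega> \<partial>M)) / (mean_total - 1)"
proof -
  define p s where "p = (\<integral>\<omega>. X i \<omega> \<partial>M)" and "s = (\<integral>\<omega>. Y' i \<omega> \<partial>M)"
  note moments = coupled_moments[OF i sum1 como, folded p_def s_def]
  have "mean_total - 1 = (\<Sum>j\<in>{..<n} - {i}. \<integral>\<omega>. total j \<omega> \<partial>M) + s"
    using mean_total_split[OF i] moments(1) by (simp add: p_def s_def)
  then have K: "(mean_total - 1) * (s * rest_recip 2 i + (1 - s) * rest_recip 1 i) \<le> 1"
    using rest_recip_le_1[OF i] by (simp add: s_def)
  from T have "0 < mean_total - 1"
    by simp
  from coupled_shares_le[OF this K] rest_recip_bounds[of i]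
    X_expectation_bounds[OF i] Y'_expectation_bounds[OF i]
  show "(\<integral>\<omega>. X i \<omega> / (total i \<omega> + rest i \<omega>) \<partial>M) \<le> (\<integral>\<omega>. X i \<omega> \<partial>M) / (mean_total - 1)"
    and "(\<integral>\<omega>. (Y i \<omega> + Y' i \<omega>) / (total i \<omega> + rest i \<omega>) \<partial>M)
      \<le> ((\<integral>\<omega>. Y i \<omega> \<partial>M) + (\<integral>\<omega>. Y' i \<omega> \<partial>M)) / (mean_total - 1)"
    unfolding expectation_X_share[OF i] expectation_Y_share[OF i] moments p_def[symmetric] s_def[symmetric]
    by auto
qed

lemma share_bounds:
  assumes "i < n" "1 < mean_total"
  shows "(\<integral>\<omega>. X i \<omega> / (total i \<omega> + rest i \<omega>) \<partial>M) \<le> (\<integral>\<omega>. X i \<omega> \<partial>M) / (mean_total - 1)"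
    and "(\<integral>\<omega>. (Y i \<omega> + Y' i \<omega>) / (total i \<omega> + rest i \<omega>) \<partial>M)
      \<le> ((\<integral>\<omega>. Y i \<omega> \<partial>M) + (\<integral>\<omega>. Y' i \<omega> \<partial>M)) / (mean_total - 1)"
  using coupled[OF assms(1)] share_bounds_if_null[OF assms] share_bounds_if_coupled[OF assms] by blast+

lemma integral_sum_share:
  assumes meas: "\<And>i. i < n \<Longrightarrow> F i \<in> borel_measurable M"
    and bounds: "\<And>i \<omega>. i < n \<Longrightarrow> \<omega> \<in> space M \<Longrightarrow> 0 \<le> F i \<omega> \<and> F i \<omega> \<le> total i \<omega>"
  shows "(\<integral>\<omega>. (\<Sum>i<n. F i \<omega>) / (\<Sum>i<n. total i \<omega>) \<partial>M)
    = (\<Sum>i<n. \<integral>\<omega>. F i \<omega> / (total i \<omega> + rest i \<omega>) \<partial>M)"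
proof -
  have "(\<Sum>i<n. F i \<omega>) / (\<Sum>i<n. total i \<omega>) = (\<Sum>i<n. F i \<omega> / (total i \<omega> + rest i \<omega>))" for \<omega>
    by (simp add: sum_divide_distrib sum_total_eq)
  moreover have "integrable M (\<lambda>\<omega>. F i \<omega> / (total i \<omega> + rest i \<omega>))" if i: "i < n" for i
  proof (rule integrable_bounded_on_space[where B=1])
    show "(\<lambda>\<omega>. F i \<omega> / (total i \<omega> + rest i \<omega>)) \<in> borel_measurable M"
      using meas[OF i] total_measurable[OF i] by measurable
    show "\<bar>F i \<omega> / (total i \<omega> + rest i \<omega>)\<bar> \<le> 1" if "\<omega> \<in> space M" for \<omega>
      using bounds[OF i that] rest_nonneg[OF that, of i] by (auto simp: divide_le_eq_1)
  qed
  ultimately show ?thesis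
    by simp
qed

lemma expectation_sum_shares_le:
  assumes T: "1 < mean_total"
  shows "(\<integral>\<omega>. (\<Sum>i<n. X i \<omega>) / (\<Sum>i<n. total i \<omega>) \<partial>M) \<le> (\<Sum>i<n. \<integral>\<omega>. X i \<omega> \<partial>M) / (mean_total - 1)"
    and "(\<integral>\<omega>. (\<Sum>i<n. Y i \<omega> + Y' i \<omega>) / (\<Sum>i<n. total i \<omega>) \<partial>M)
      \<le> (\<Sum>i<n. (\<integral>\<omega>. Y i \<omega> \<partial>M) + (\<integral>\<omega>. Y' i \<omega> \<partial>M)) / (mean_total - 1)"
proof -
  have "(\<integral>\<omega>. (\<Sum>i<n. X i \<omega>) / (\<Sum>i<n. total i \<omega>) \<partial>M)
      = (\<Sum>i<n. \<integral>\<omega>. X i \<omega> / (total i \<omega> + rest i \<omega>) \<partial>M)"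
    by (rule integral_sum_share) (auto dest: bernoulli simp: total_def)
  also have "\<dots> \<le> (\<Sum>i<n. (\<integral>\<omega>. X i \<omega> \<partial>M) / (mean_total - 1))"
    using share_bounds(1)[OF _ T] by (intro sum_mono) simp
  finally show "(\<integral>\<omega>. (\<Sum>i<n. X i \<omega>) / (\<Sum>i<n. total i \<omega>) \<partial>M) \<le> (\<Sum>i<n. \<integral>\<omega>. X i \<omega> \<partial>M) / (mean_total - 1)"
    by (simp add: sum_divide_distrib)
  have "(\<integral>\<omega>. (\<Sum>i<n. Y i \<omega> + Y' i \<omega>) / (\<Sum>i<n. total i \<omega>) \<partial>M)
      = (\<Sum>i<n. \<integral>\<omega>. (Y i \<omega> + Y' i \<omega>) / (total i \<omega> + rest i \<omega>) \<partial>M)"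
    by (rule integral_sum_share) (auto dest: bernoulli simp: total_def)
  also have "\<dots> \<le> (\<Sum>i<n. ((\<integral>\<omega>. Y i \<omega> \<partial>M) + (\<integral>\<omega>. Y' i \<omega> \<partial>M)) / (mean_total - 1))"
    using share_bounds(2)[OF _ T] by (intro sum_mono) simp
  finally show "(\<integral>\<omega>. (\<Sum>i<n. Y i \<omega> + Y' i \<omega>) / (\<Sum>i<n. total i \<omega>) \<partial>M)
      \<le> (\<Sum>i<n. (\<integral>\<omega>. Y i \<omega> \<partial>M) + (\<integral>\<omega>. Y' i \<omega> \<partial>M)) / (mean_total - 1)"
    by (simp add: sum_divide_distrib)
qed

lemma expected_share_bounds:
  defines "SX \<equiv> \<lambda>\<omega>. \<Sum>i<n. X i \<omega>" and "SY \<equiv> \<lambda>\<omega>. \<Sum>i<n. Y i \<omega> + Y' i \<omega>"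
  assumes big: "1 < (\<integral>\<omega>. SX \<omega> \<partial>M) + (\<integral>\<omega>. SY \<omega> \<partial>M)"
  shows "((\<integral>\<omega>. SX \<omega> \<partial>M) - 1) / ((\<integral>\<omega>. SX \<omega> \<partial>M) + (\<integral>\<omega>. SY \<omega> \<partial>M) - 1)
      \<le> (\<integral>\<omega>. (if SX \<omega> + SY \<omega> = 0 then 1 else SX \<omega> / (SX \<omega> + SY \<omega>)) \<partial>M)"
    and "(\<integral>\<omega>. (if SX \<omega> + SY \<omega> = 0 then 0 else SX \<omega> / (SX \<omega> + SY \<omega>)) \<partial>M)
      \<le> (\<integral>\<omega>. SX \<omega> \<partial>M) / ((\<integral>\<omega>. SX \<omega> \<partial>M) + (\<integral>\<omega>. SY \<omega> \<partial>M) - 1)"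
proof -
  have S: "SX \<omega> + SY \<omega> = (\<Sum>i<n. total i \<omega>)" for \<omega>
    by (simp add: SX_def SY_def total_def sum.distrib add.assoc)
  have EX: "(\<integral>\<omega>. SX \<omega> \<partial>M) = (\<Sum>i<n. \<integral>\<omega>. X i \<omega> \<partial>M)"
    unfolding SX_def using X_integrable by simp
  have EY: "(\<integral>\<omega>. SY \<omega> \<partial>M) = (\<Sum>i<n. (\<integral>\<omega>. Y i \<omega> \<partial>M) + (\<integral>\<omega>. Y' i \<omega> \<partial>M))"
    unfolding SY_def using Y_integrable Y'_integrable by simp
  have T: "mean_total = (\<integral>\<omega>. SX \<omega> \<partial>M) + (\<integral>\<omega>. SY \<omega> \<partial>M)"
    using X_integrable Y_integrable Y'_integrable
    by (simp add: EX EY mean_total_def total_def sum.distrib add.assoc)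
  have SX_eq: "(\<Sum>i<n. X i \<omega>) = SX \<omega>" and SY_eq: "(\<Sum>i<n. Y i \<omega> + Y' i \<omega>) = SY \<omega>" for \<omega>
    by (simp_all add: SX_def SY_def)
  note ratio = expectation_sum_shares_le[unfolded T, OF big,
      unfolded S[symmetric] SX_eq SY_eq EX[symmetric] EY[symmetric]]
  have "(if SX \<omega> + SY \<omega> = 0 then 0 else SX \<omega> / (SX \<omega> + SY \<omega>)) = SX \<omega> / (SX \<omega> + SY \<omega>)" for \<omega>
    by simp \<comment> \<open>division by zero yields zero\<close>
  with ratio(1) show "(\<integral>\<omega>. (if SX \<omega> + SY \<omega> = 0 then 0 else SX \<omega> / (SX \<omega> + SY \<omega>)) \<partial>M)
      \<le> (\<integral>\<omega>. SX \<omega> \<partial>M) / ((\<integral>\<omega>. SX \<omega> \<partial>M) + (\<integral>\<omega>. SY \<omega> \<partial>M) - 1)"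
    by simp
  have "(\<integral>\<omega>. (if SX \<omega> + SY \<omega> = 0 then 1 else SX \<omega> / (SX \<omega> + SY \<omega>)) \<partial>M)
      = 1 - (\<integral>\<omega>. SY \<omega> / (SX \<omega> + SY \<omega>) \<partial>M)"
  proof (rule integral_share_complement)
    show "SX \<in> borel_measurable M" "SY \<in> borel_measurable M"
      unfolding SX_def SY_def by measurable
    show "0 \<le> SX \<omega> \<and> 0 \<le> SY \<omega>" if "\<omega> \<in> space M" for \<omega>
      unfolding SX_def SY_def using bernoulli_nonneg that by (auto intro!: sum_nonneg add_nonneg_nonneg)
  qed
  moreover have "((\<integral>\<omega>. SX \<omega> \<partial>M) - 1) / ((\<integral>\<omega>. SX \<omega> \<partial>M) + (\<integral>\<omega>. SY \<omega> \<partial>M) - 1)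
      = 1 - (\<integral>\<omega>. SY \<omega> \<partial>M) / ((\<integral>\<omega>. SX \<omega> \<partial>M) + (\<integral>\<omega>. SY \<omega> \<partial>M) - 1)"
    using big by (simp add: divide_eq_eq diff_divide_eq_iff)
  ultimately show "((\<integral>\<omega>. SX \<omega> \<partial>M) - 1) / ((\<integral>\<omega>. SX \<omega> \<partial>M) + (\<integral>\<omega>. SY \<omega> \<partial>M) - 1)
      \<le> (\<integral>\<omega>. (if SX \<omega> + SY \<omega> = 0 then 1 else SX \<omega> / (SX \<omega> + SY \<omega>)) \<partial>M)"
    using ratio(2) by linarith
qed

end

theorem theorem4:
  fixes M :: "'a measure" and n :: nat and X Y Y' :: "nat \<Rightarrow> 'a \<Rightarrow> real"
  defines "SX \<equiv> (\<lambda>\<omega>. \<Sum>i<n. X i \<omega>)"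
      and "SY \<equiv> (\<lambda>\<omega>. \<Sum>i<n. Y i \<omega> + Y' i \<omega>)"
  assumes prob: "prob_space M"
    and bern: "\<forall>i<n. \<forall>\<omega>\<in>space M. X i \<omega> \<in> {0, 1} \<and> Y i \<omega> \<in> {0, 1} \<and> Y' i \<omega> \<in> {0, 1}"
    and indep: "prob_space.indep_vars M (\<lambda>_. borel)
                  (\<lambda>i \<omega>. (X i \<omega>, Y i \<omega>, Y' i \<omega>)) {..<n}"
    and disj: "\<forall>i<n. (\<integral>\<omega>. X i \<omega> * Y i \<omega> \<partial>M) = 0"
    and cases: "\<forall>i<n. (\<integral>\<omega>. Y' i \<omega> \<partial>M) = 0 \<or>
       ((\<integral>\<omega>. Y i \<omega> \<partial>M) = 1 - (\<integral>\<omega>. X i \<omega> \<partial>M) \<and>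
        (\<exists>\<theta> :: 'a \<Rightarrow> real. \<theta> \<in> borel_measurable M \<and>
            distr M lborel \<theta> = uniform_measure lborel {0..1} \<and>
            (AE \<omega> in M. X i \<omega> = (if \<theta> \<omega> < (\<integral>\<omega>. X i \<omega> \<partial>M) then 1 else 0) \<and>
                          Y' i \<omega> = (if \<theta> \<omega> < (\<integral>\<omega>. Y' i \<omega> \<partial>M) then 1 else 0))))"
    and big: "(\<integral>\<omega>. SX \<omega> \<partial>M) + (\<integral>\<omega>. SY \<omega> \<partial>M) > 1"
  shows "(((\<integral>\<omega>. SX \<omega> \<partial>M) - 1) / ((\<integral>\<omega>. SX \<omega> \<partial>M) + (\<integral>\<omega>. SY \<omega> \<partial>M) - 1)
           \<le> (\<integral>\<omega>. (if SX \<omega> + SY \<omega> = 0 then 1 else SX \<omega> / (SX \<omega> + SY \<omega>)) \<partial>M)) \<and>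
         ((\<integral>\<omega>. (if SX \<omega> + SY \<omega> = 0 then 0 else SX \<omega> / (SX \<omega> + SY \<omega>)) \<partial>M)
           \<le> (\<integral>\<omega>. SX \<omega> \<partial>M) / ((\<integral>\<omega>. SX \<omega> \<partial>M) + (\<integral>\<omega>. SY \<omega> \<partial>M) - 1))"
proof -
  interpret bernoulli_triples M n X Y Y'
    using prob bern indep by (intro bernoulli_triples.intro bernoulli_triples_axioms.intro) auto
  interpret coupled_bernoulli_triples M n X Y Y'
    using disj cases by (rule coupled_bernoulli_triplesI)
  show ?thesis
    using expected_share_bounds big unfolding SX_def SY_def by auto
qed

end
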